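(* Let ${\cal R}={\cal D}\times[0,N]$ be a cylinder and let ${\mathbf t}$ be a mixed tiling of ${\cal R}$. Let $\kappa$ be the set of unit cubes $[x,x+1]\times[y,y+1]\times[z,z+1]\subseteq{\cal R}$ with $x+y$ even and $\bar\kappa$ the set of those with $x+y$ odd. Then $\operatorname{Tw}_\kappa({\mathbf t})=-\operatorname{Tw}_{\bar\kappa}({\mathbf t})$.
   Context: Unit cubes are $[x,x+1]\times[y,y+1]\times[z,z+1]$, $(x,y,z)\in\mathbb{Z}^3$; the $n$-th floor is $z\in[n,n+1]$. A cylinder is ${\cal R}={\cal D}\times[0,N]$ where ${\cal D}$ is a connected, simply connected finite union of unit squares in the plane. A domino is a union of two unit cubes sharing a face; it is vertical if parallel to the $z$-axis, horizontal otherwise. A horizontal slab is a $2\times2\times1$ box $[x,x+2]\times[y,y+2]\times[z,z+1]$. A mixed tiling of ${\cal R}$ is a tiling of ${\cal R}$ by horizontal slabs and vertical dominoes. Twist of a domino tiling ${\mathbf s}$ of a cubiculated region: for an ordered pair $(d_0,d_1)$ of dominoes of ${\mathbf s}$ with $d_0$ horizontal and parallel to the $y$-axis and $d_1$ vertical, say $d_1$ affects $d_0$ if $d_1$ has a cube on the floor of $d_0$ and the orthogonal projections of the interiors of $d_0,d_1$ onto the plane $x=0$ intersect. In that case the effect is $\pm1$, determined by four binary parameters: whether $d_1$ lies on the $+x$ or $-x$ side of $d_0$; which of the two cubes of $d_0$ (smaller or larger $y$) has the same $y$-range as $d_1$; the parity of the $x$-distance between them; and whether the lower cube of $d_1$ lies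 on the floor of $d_0$ or on the floor below. Changing any one parameter changes the sign, with a fixed global normalization. Otherwise the effect is $0$. $\operatorname{Tw}({\mathbf s})$ is $\frac14$ of the sum of all effects. Transformation: for a set $\kappa$ of cubes of one parity of $x+y$, replace each cube $[x,x+1]\times[y,y+1]\times[z,z+1]$ in $\kappa$ by $\tilde S\times[z,z+1]$, where $\tilde S$ is the square with vertices $(x-\frac12,y+\frac12),(x+\frac12,y-\frac12),(x+\frac32,y+\frac12),(x+\frac12,y+\frac32)$, and delete the other cubes. The union $\tilde{\cal R}_\kappa$ is a cubiculated region after a $45^\circ$ rotation about the $z$-axis and horizontal rescaling. Each horizontal slab of ${\mathbf t}$ contains exactly two cubes of $\kappa$, and it is sent to the domino formed by their two inflated squares. Each vertical domino of ${\mathbf t}$ whose cubes are in $\kappa$ is sent to the vertical domino formed by their inflations. Vertical dominoes with cubes not in $\kappa$ are deleted. This gives a domino tiling $\tilde{\mathbf t}_\kappa$ of $\tilde{\cal R}_\kappa$, and $\operatorname{Tw}_\kappa({\mathbf t}):=\operatorname{Tw}(\tilde{\mathbf t}_\kappa)\in\mathbb{Z}$. *)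

theory Defs
  imports "HOL-Analysis.Analysis"
begin

text \<open>A unit cube [x,x+1]x[y,y+1]x[z,z+1] is represented by its integer corner (x,y,z).
  Regions and tiles are sets of unit cubes.\<close>

type_synonym cube = "int \<times> int \<times> int"

definition unit_square :: "int \<times> int \<Rightarrow> (real \<times> real) set" where
  "unit_square q = {real_of_int (fst q) .. real_of_int (fst q) + 1} \<times>
                   {real_of_int (snd q) .. real_of_int (snd q) + 1}"

definition planar_domain :: "(int \<times> int) set \<Rightarrow> bool" where
  "planar_domain D \<longleftrightarrow> finite D \<and>
     connected (\<Union>q\<in>D. unit_square q) \<and> simply_connected (\<Union>q\<in>D. unit_square q)"

definition cylinder :: "(int \<times> int) set \<Rightarrow> nat \<Rightarrow> cube set" where
  "cylinder D N = {(x, y, z). (x, y) \<in> D \<and> 0 \<le> z \<and> z < int N}"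

definition xdom :: "cube \<Rightarrow> cube set" where
  "xdom p = (case p of (x, y, z) \<Rightarrow> {(x, y, z), (x + 1, y, z)})"
definition ydom :: "cube \<Rightarrow> cube set" where
  "ydom p = (case p of (x, y, z) \<Rightarrow> {(x, y, z), (x, y + 1, z)})"
definition zdom :: "cube \<Rightarrow> cube set" where
  "zdom p = (case p of (x, y, z) \<Rightarrow> {(x, y, z), (x, y, z + 1)})"

definition hslab :: "cube \<Rightarrow> cube set" where
  "hslab p = (case p of (x, y, z) \<Rightarrow>
      {(x, y, z), (x + 1, y, z), (x, y + 1, z), (x + 1, y + 1, z)})"

definition is_tiling :: "cube set set \<Rightarrow> cube set \<Rightarrow> bool" where
  "is_tiling t R \<longleftrightarrow> \<Union> t = R \<and> (\<forall>T\<in>t. \<forall>T'\<in>t. T \<noteq> T' \<longrightarrow> T \<inter> T' = {})"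

definition mixed_tiling :: "cube set set \<Rightarrow> cube set \<Rightarrow> bool" where
  "mixed_tiling t R \<longleftrightarrow> is_tiling t R \<and>
     (\<forall>T\<in>t. (\<exists>p. T = hslab p) \<or> (\<exists>p. T = zdom p))"

text \<open>Effect of the vertical domino zdom p1 on the y-parallel horizontal domino ydom p0.
  The four parameters: side (sign of x1-x0), which cube of d0 shares the y-range of d1,
  parity of the x-distance, and whether the lower cube of d1 is on the floor of d0 or the
  floor below.  Global normalization: effect = -1 when x1 = x0+1, y1 = y0, z1 = z0.\<close>
definition effect :: "cube \<Rightarrow> cube \<Rightarrow> int" where
  "effect p0 p1 = (case p0 of (x0, y0, z0) \<Rightarrow> case p1 of (x1, y1, z1) \<Rightarrow>
     if (z1 = z0 \<or> z1 + 1 = z0) \<and> (y1 = y0 \<or> y1 = y0 + 1)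
     then sgn (x1 - x0) * (-1) ^ (nat ((x1 - x0) mod 2) + (if y1 = y0 then 0 else 1)
                                   + (if z1 = z0 then 0 else 1))
     else 0)"

definition twist :: "cube set set \<Rightarrow> real" where
  "twist s = real_of_int (\<Sum>p0\<in>{p. ydom p \<in> s}. \<Sum>p1\<in>{p. zdom p \<in> s}. effect p0 p1) / 4"

text \<open>Inflation of cubes of one parity class, followed by the 45 degree rotation and
  rescaling: the inflated square of (x,y) becomes the unit square with corner
  (floor((x+y)/2), floor((y-x)/2)).\<close>
definition rot :: "cube \<Rightarrow> cube" where
  "rot p = (case p of (x, y, z) \<Rightarrow> ((x + y) div 2, (y - x) div 2, z))"

definition transform :: "cube set \<Rightarrow> cube set set \<Rightarrow> cube set set" where
  "transform \<kappa> t = (\<lambda>T. rot ` (T \<inter> \<kappa>)) ` {T \<in> t. T \<inter> \<kappa> \<noteq> {}}"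

definition Tw_kappa :: "cube set \<Rightarrow> cube set set \<Rightarrow> real" where
  "Tw_kappa \<kappa> t = twist (transform \<kappa> t)"

definition kappa_even :: "cube set \<Rightarrow> cube set" where
  "kappa_even R = {c \<in> R. case c of (x, y, z) \<Rightarrow> even (x + y)}"
definition kappa_odd :: "cube set \<Rightarrow> cube set" where
  "kappa_odd R = {c \<in> R. case c of (x, y, z) \<Rightarrow> odd (x + y)}"

end

theory Submission
  imports Defs
begin

text \<open>
  Under the transformation for the parity class \<beta>, a slab becomes an x-parallel domino when
  its two \<beta>-cubes lie on a diagonal (x, y), (x + 1, y + 1), and a y-parallel domino otherwise;
  a vertical domino survives exactly when it lies in the class. Hence the sum of the two twists is
  a quarter of a sum, over all pairs of a slab q and a vertical domino v of the tiling, of one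
  quantity that vanishes when q and v have the same parity. Case analysis shows that this
  quantity is the sum over the four cubes e of q of K(e, v) - K(e, v'), where v' is the cube
  above v, for a kernel K that is translation invariant, symmetric and confined to a single floor.
  Summing over the slabs is summing over the whole cylinder minus the cubes of the vertical
  dominoes. The cylinder term vanishes because all floors of a cylinder look alike, and the double
  sum over pairs of vertical dominoes vanishes by the symmetry of K.
\<close>

lemma image_if_split:
  "(\<lambda>x. if P x then f x else g x) ` A = f ` {x \<in> A. P x} \<union> g ` {x \<in> A. \<not> P x}"
  by auto

lemma sum_sum_cross_classes:
  fixes p :: "'a \<Rightarrow> bool" and r :: "'b \<Rightarrow> bool"
    and G :: "'a \<Rightarrow> 'b \<Rightarrow> 'c::comm_monoid_add"
  assumes "finite A" and "finite B" and "\<And>a b. p a = r b \<Longrightarrow> G a b = 0"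
  shows "(\<Sum>a\<in>A. \<Sum>b\<in>B. G a b) =
    (\<Sum>\<beta>\<in>UNIV. \<Sum>a\<in>{a \<in> A. p a \<noteq> \<beta>}. \<Sum>b\<in>{b \<in> B. r b = \<beta>}. G a b)"
proof -
  have "(\<Sum>b\<in>B. G a b) =
      (\<Sum>\<beta>\<in>UNIV. if p a \<noteq> \<beta> then \<Sum>b\<in>{b \<in> B. r b = \<beta>}. G a b else 0)" for a
  proof -
    have "(\<Sum>b\<in>B. G a b) = (\<Sum>b\<in>{b \<in> B. r b = (\<not> p a)}. G a b)"
      using assms(2,3) by (intro sum.mono_neutral_right) auto
    then show ?thesis by (simp add: UNIV_bool)
  qed
  then show ?thesis
    using assms(1) by (simp add: sum.swap[of _ A UNIV] sum.inter_filter)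
qed

definition even_cube :: "cube \<Rightarrow> bool" where
  "even_cube c = (case c of (x, y, z) \<Rightarrow> even (x + y))"

definition parity_class :: "bool \<Rightarrow> cube set \<Rightarrow> cube set" where
  "parity_class \<beta> R = {c \<in> R. even_cube c = \<beta>}"

lemma kappa_even_eq_parity_class: "kappa_even R = parity_class True R"
  by (simp add: kappa_even_def parity_class_def even_cube_def)

lemma kappa_odd_eq_parity_class: "kappa_odd R = parity_class False R"
  by (auto simp: kappa_odd_def parity_class_def even_cube_def split: prod.splits)

definition cube_above :: "cube \<Rightarrow> cube" where
  "cube_above c = (case c of (x, y, z) \<Rightarrow> (x, y, z + 1))"

lemma zdom_eq: "zdom v = {v, cube_above v}"
  by (cases v) (simp add: zdom_def cube_above_def)

lemma corner_in_hslab: "q \<in> hslab q"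
  by (cases q) (simp add: hslab_def)

lemma inj_hslab: "inj hslab"
proof (rule injI)
  fix q q' :: cube assume "hslab q = hslab q'"
  with corner_in_hslab have "q \<in> hslab q'" "q' \<in> hslab q" by metis+
  then show "q = q'" by (auto simp: hslab_def split: prod.splits)
qed

lemma inj_zdom: "inj zdom"
  unfolding inj_def zdom_def by (auto simp: doubleton_eq_iff)

lemma inj_ydom: "inj ydom"
  unfolding inj_def ydom_def by (auto simp: doubleton_eq_iff)

lemma hslab_neq_zdom: "hslab q \<noteq> zdom v"
proof
  assume "hslab q = zdom v"
  moreover obtain a b z where "q = (a, b, z)" by (cases q)
  ultimately have "(a, b, z) \<in> zdom v" "(a + 1, b, z) \<in> zdom v" by (auto simp: hslab_def)
  then show False by (auto simp: zdom_def split: prod.splits)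
qed

lemma ydom_neq_xdom: "ydom p \<noteq> xdom p'"
  and ydom_neq_zdom: "ydom p \<noteq> zdom p'"
  and zdom_neq_xdom: "zdom p \<noteq> xdom p'"
  by (auto simp: ydom_def zdom_def xdom_def doubleton_eq_iff split: prod.splits)

lemma tile_subset: "mixed_tiling t R \<Longrightarrow> T \<in> t \<Longrightarrow> T \<subseteq> R"
  unfolding mixed_tiling_def is_tiling_def by blast

lemma mixed_tiling_tiles:
  assumes "mixed_tiling t R"
  shows "t = hslab ` {q. hslab q \<in> t} \<union> zdom ` {v. zdom v \<in> t}"
proof (intro equalityI subsetI)
  fix T assume "T \<in> t"
  with assms have "(\<exists>q. T = hslab q) \<or> (\<exists>v. T = zdom v)" unfolding mixed_tiling_def by blast
  with \<open>T \<in> t\<close> show "T \<in> hslab ` {q. hslab q \<in> t} \<union> zdom ` {v. zdom v \<in> t}" by blast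
qed auto

lemma tile_corners_subset:
  assumes "mixed_tiling t R"
  shows "{q. hslab q \<in> t} \<subseteq> R" and "{v. zdom v \<in> t} \<subseteq> R"
  using tile_subset[OF assms] corner_in_hslab zdom_eq by blast+

lemma finite_cylinder:
  assumes "finite D"
  shows "finite (cylinder D N)"
proof -
  have "cylinder D N = (\<lambda>((x, y), z). (x, y, z)) ` (D \<times> {0..<int N})"
    by (force simp: cylinder_def image_iff)
  with assms show ?thesis by simp
qed

lemma sum_mixed_tiling:
  assumes "mixed_tiling t R" and "finite R"
  shows "(\<Sum>e\<in>R. h e) =
    (\<Sum>q\<in>{q. hslab q \<in> t}. \<Sum>e\<in>hslab q. h e) + (\<Sum>v\<in>{v. zdom v \<in> t}. h v + h (cube_above v))"
proof -
  let ?H = "{q. hslab q \<in> t}" and ?Z = "{v. zdom v \<in> t}"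
  have "\<Union> t = R" and disj: "\<forall>A\<in>t. \<forall>B\<in>t. A \<noteq> B \<longrightarrow> A \<inter> B = {}"
    using assms(1) unfolding mixed_tiling_def is_tiling_def by auto
  then have "t \<subseteq> Pow R" and "\<forall>A\<in>t. finite A"
    using assms(2) by (auto intro: finite_subset)
  then have "finite t" using assms(2) by (auto intro: finite_subset)
  have "(\<Sum>e\<in>R. h e) = (\<Sum>T\<in>t. \<Sum>e\<in>T. h e)"
    using sum.Union_disjoint[OF \<open>\<forall>A\<in>t. finite A\<close> disj] \<open>\<Union> t = R\<close> by simp
  also have "\<dots> = (\<Sum>T\<in>hslab ` ?H. \<Sum>e\<in>T. h e) + (\<Sum>T\<in>zdom ` ?Z. \<Sum>e\<in>T. h e)"
    using \<open>finite t\<close> hslab_neq_zdom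
    by (subst (1) mixed_tiling_tiles[OF assms(1)], intro sum.union_disjoint) (auto intro: finite_subset)
  also have "\<dots> = (\<Sum>q\<in>?H. \<Sum>e\<in>hslab q. h e) + (\<Sum>v\<in>?Z. \<Sum>e\<in>zdom v. h e)"
    by (simp add: sum.reindex inj_on_subset[OF inj_hslab] inj_on_subset[OF inj_zdom])
  also have "\<dots> = (\<Sum>q\<in>?H. \<Sum>e\<in>hslab q. h e) + (\<Sum>v\<in>?Z. h v + h (cube_above v))"
    by (simp add: zdom_eq cube_above_def split: prod.splits)
  finally show ?thesis .
qed

section \<open>The transformed tilings\<close>

definition slab_ydom_corner :: "cube \<Rightarrow> cube" where
  "slab_ydom_corner q = (case q of (x, y, z) \<Rightarrow> rot (x + 1, y, z))"

lemma inj_on_rot_parity: "inj_on rot {c. even_cube c = \<beta>}"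
proof (rule inj_onI)
  fix v v' assume "v \<in> {c. even_cube c = \<beta>}" "v' \<in> {c. even_cube c = \<beta>}" "rot v = rot v'"
  moreover obtain x y z x' y' z' where "v = (x, y, z)" "v' = (x', y', z')" by (cases v, cases v')
  ultimately have sum: "(x + y) div 2 = (x' + y') div 2" and diff: "(y - x) div 2 = (y' - x') div 2"
    and parity: "even (x + y) = even (x' + y')" and "z = z'"
    by (auto simp: rot_def even_cube_def)
  from sum parity have "x + y = x' + y'" by presburger
  moreover from diff parity have "y - x = y' - x'" by presburger
  ultimately show "v = v'" using \<open>v = (x, y, z)\<close> \<open>v' = (x', y', z')\<close> \<open>z = z'\<close> by simp
qed

lemma inj_on_slab_ydom_corner_parity: "inj_on slab_ydom_corner {q. even_cube q = \<beta>}"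
proof (rule inj_onI)
  fix q q' assume "q \<in> {q. even_cube q = \<beta>}" "q' \<in> {q. even_cube q = \<beta>}"
    and "slab_ydom_corner q = slab_ydom_corner q'"
  moreover obtain x y z x' y' z' where q: "q = (x, y, z)" "q' = (x', y', z')" by (cases q, cases q')
  ultimately have "rot (x + 1, y, z) = rot (x' + 1, y', z')"
    "(x + 1, y, z) \<in> {c. even_cube c = (\<not> \<beta>)}" "(x' + 1, y', z') \<in> {c. even_cube c = (\<not> \<beta>)}"
    by (auto simp: even_cube_def slab_ydom_corner_def)
  then have "(x + 1, y, z) = (x' + 1, y', z')" by (rule inj_onD[OF inj_on_rot_parity])
  then show "q = q'" using q by simp
qed

lemma rot_hslab_parity_part:
  "rot ` {c \<in> hslab q. even_cube c = \<beta>} =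
     (if even_cube q = \<beta> then xdom (rot q) else ydom (slab_ydom_corner q))"
proof -
  obtain a b z where q: "q = (a, b, z)" by (cases q)
  have "{c \<in> hslab q. even_cube c = \<beta>} =
      (if even (a + b) = \<beta> then {(a, b, z), (a + 1, b + 1, z)} else {(a + 1, b, z), (a, b + 1, z)})"
    by (auto simp: q hslab_def even_cube_def; presburger)
  moreover have "rot (a + 1, b + 1, z) = (fst (rot q) + 1, snd (rot q))"
    by (simp add: q rot_def; presburger)
  moreover have "rot (a, b + 1, z) = (fst (rot (a + 1, b, z)), fst (snd (rot (a + 1, b, z))) + 1, z)"
    by (simp add: rot_def; presburger)
  ultimately show ?thesis
    by (auto simp: q even_cube_def xdom_def ydom_def slab_ydom_corner_def rot_def)
qed

lemma zdom_parity_part: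
  "{c \<in> zdom v. even_cube c = \<beta>} = (if even_cube v = \<beta> then zdom v else {})"
  by (cases v) (auto simp: zdom_def even_cube_def)

lemma rot_zdom_parity_part:
  "rot ` {c \<in> zdom v. even_cube c = \<beta>} = (if even_cube v = \<beta> then zdom (rot v) else {})"
proof -
  have "rot ` zdom v = zdom (rot v)" by (cases v) (simp add: zdom_def rot_def)
  then show ?thesis by (simp add: zdom_parity_part)
qed

lemma transform_parity_class:
  assumes "mixed_tiling t R"
  shows "transform (parity_class \<beta> R) t =
      xdom ` rot ` {q. hslab q \<in> t \<and> even_cube q = \<beta>} \<union>
      ydom ` slab_ydom_corner ` {q. hslab q \<in> t \<and> even_cube q \<noteq> \<beta>} \<union>
      zdom ` rot ` {v. zdom v \<in> t \<and> even_cube v = \<beta>}"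
proof -
  let ?part = "\<lambda>T. {c \<in> T. even_cube c = \<beta>}"
  have "T \<inter> parity_class \<beta> R = ?part T" if "T \<in> t" for T
    using tile_subset[OF assms that] by (auto simp: parity_class_def)
  then have "transform (parity_class \<beta> R) t = (\<lambda>T. rot ` ?part T) ` {T \<in> t. ?part T \<noteq> {}}"
    unfolding transform_def by (intro image_cong Collect_cong) (auto simp: parity_class_def)
  moreover have "{T \<in> t. ?part T \<noteq> {}} =
      hslab ` {q. hslab q \<in> t} \<union> zdom ` {v. zdom v \<in> t \<and> even_cube v = \<beta>}"
  proof -
    have "?part (hslab q) \<noteq> {}" for q
    proof -
      obtain a b z where q: "q = (a, b, z)" by (cases q)
      have "(a, b, z) \<in> hslab q" "(a + 1, b, z) \<in> hslab q" by (simp_all add: q hslab_def)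
      moreover have "even_cube (a, b, z) = \<beta> \<or> even_cube (a + 1, b, z) = \<beta>"
        by (auto simp: even_cube_def)
      ultimately show ?thesis by blast
    qed
    moreover have "?part (zdom v) \<noteq> {} \<longleftrightarrow> even_cube v = \<beta>" for v
      unfolding zdom_parity_part by (simp add: zdom_eq)
    ultimately show ?thesis
      by (subst (1) mixed_tiling_tiles[OF assms]) blast
  qed
  moreover have "(\<lambda>T. rot ` ?part T) ` hslab ` {q. hslab q \<in> t} =
      xdom ` rot ` {q. hslab q \<in> t \<and> even_cube q = \<beta>} \<union>
      ydom ` slab_ydom_corner ` {q. hslab q \<in> t \<and> even_cube q \<noteq> \<beta>}"
    unfolding image_image rot_hslab_parity_part image_if_split by simp
  moreover have "(\<lambda>T. rot ` ?part T) ` zdom ` {v. zdom v \<in> t \<and> even_cube v = \<beta>} =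
      zdom ` rot ` {v. zdom v \<in> t \<and> even_cube v = \<beta>}"
    unfolding image_image by (intro image_cong) (simp_all add: rot_zdom_parity_part)
  ultimately show ?thesis by (simp add: image_Un)
qed

lemma ydom_corners_transform:
  assumes "mixed_tiling t R"
  shows "{p. ydom p \<in> transform (parity_class \<beta> R) t} =
    slab_ydom_corner ` {q. hslab q \<in> t \<and> even_cube q \<noteq> \<beta>}"
  by (auto simp: transform_parity_class[OF assms] inj_ydom inj_eq ydom_neq_xdom ydom_neq_zdom)

lemma zdom_corners_transform:
  assumes "mixed_tiling t R"
  shows "{p. zdom p \<in> transform (parity_class \<beta> R) t} = rot ` {v. zdom v \<in> t \<and> even_cube v = \<beta>}"
  by (auto simp: transform_parity_class[OF assms] inj_zdom inj_eq zdom_neq_xdom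
      not_sym[OF ydom_neq_zdom])

section \<open>A potential for the effect\<close>

definition parity_sign :: "int \<Rightarrow> int" where
  "parity_sign n = (if even n then 1 else -1)"

lemma parity_sign_diff_one: "parity_sign (n - 1) = - parity_sign n"
  by (simp add: parity_sign_def)

lemma parity_sign_uminus: "parity_sign (- n) = parity_sign n"
  by (simp add: parity_sign_def)

lemma effect_eq_parity_sign:
  "effect (x0, y0, z0) (x1, y1, z1) =
    (if (z1 = z0 \<or> z1 + 1 = z0) \<and> (y1 = y0 \<or> y1 = y0 + 1)
     then sgn (x1 - x0) * parity_sign (x1 - x0) *
       (if y1 = y0 then 1 else -1) * (if z1 = z0 then 1 else -1)
     else 0)"
proof -
  have "(-1::int) ^ nat (m mod 2) = parity_sign m" for m
    by (cases "even m") (auto simp: parity_sign_def even_iff_mod_2_eq_zero odd_iff_mod_2_eq_one)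
  then show ?thesis unfolding effect_def by (simp add: power_add)
qed

definition effect_profile :: "int \<Rightarrow> int \<Rightarrow> int" where
  "effect_profile i j =
    (if j = i + 1 then - sgn i * parity_sign i
     else if j = i - 1 then sgn (i - 1) * parity_sign (i - 1) else 0)"

lemma effect_slab_ydom_corner_rot:
  assumes "odd (a + b + c + d)"
  shows "effect (slab_ydom_corner (a, b, z)) (rot (c, d, w)) =
    (if w = z then effect_profile (c - a) (d - b)
     else if w + 1 = z then - effect_profile (c - a) (d - b) else 0)"
proof -
  have rot: "effect (slab_ydom_corner (a, b, z)) (rot (c, d, w)) =
      effect ((a + 1 + b) div 2, (b - (a + 1)) div 2, z) ((c + d) div 2, (d - c) div 2, w)"
    by (simp add: slab_ydom_corner_def rot_def)
  consider "d - b = c - a + 1" | "d - b = c - a - 1" | "d - b \<noteq> c - a + 1" "d - b \<noteq> c - a - 1"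
    by blast
  then show ?thesis
  proof cases
    case 1
    then have "(d - c) div 2 = (b - (a + 1)) div 2 + 1" "(c + d) div 2 - (a + 1 + b) div 2 = c - a"
      by presburger+
    with 1 show ?thesis unfolding rot effect_eq_parity_sign by (simp add: effect_profile_def)
  next
    case 2
    then have "(d - c) div 2 = (b - (a + 1)) div 2" "(c + d) div 2 - (a + 1 + b) div 2 = c - a - 1"
      by presburger+
    with 2 show ?thesis unfolding rot effect_eq_parity_sign by (simp add: effect_profile_def)
  next
    case 3
    with assms have "(d - c) div 2 \<noteq> (b - (a + 1)) div 2" "(d - c) div 2 \<noteq> (b - (a + 1)) div 2 + 1"
      by presburger+
    with 3 show ?thesis unfolding rot effect_eq_parity_sign by (simp add: effect_profile_def)
  qed
qed

definition quadrant_kernel :: "int \<Rightarrow> int \<Rightarrow> int" where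
  "quadrant_kernel i j =
    (if 1 \<le> i \<and> 1 \<le> j then (if i < j then parity_sign j else if j < i then - parity_sign i else 0)
     else 0)"

(* A discrete primitive of effect_profile (kernel_box_eq); being even, it makes floor_kernel
   symmetric. *)
definition plane_kernel :: "int \<Rightarrow> int \<Rightarrow> int" where
  "plane_kernel i j = quadrant_kernel i j + quadrant_kernel (- i) (- j)"

definition kernel_box :: "int \<Rightarrow> int \<Rightarrow> int" where
  "kernel_box i j =
    plane_kernel i j + plane_kernel (i - 1) j + plane_kernel i (j - 1) + plane_kernel (i - 1) (j - 1)"

lemma kernel_box_eq: "kernel_box i j = (if even (i + j) then 0 else effect_profile i j)"
proof -
  have "j \<ge> i + 2 \<or> j = i + 1 \<or> j = i \<or> j = i - 1 \<or> j \<le> i - 2"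
    and "i \<ge> 2 \<or> i = 1 \<or> i = 0 \<or> i = -1 \<or> i \<le> -2"
    and "j \<ge> 2 \<or> j = 1 \<or> j = 0 \<or> j = -1 \<or> j \<le> -2"
    by linarith+
  then show ?thesis
    unfolding kernel_box_def plane_kernel_def quadrant_kernel_def effect_profile_def
    by (elim disjE; simp add: parity_sign_diff_one parity_sign_uminus sgn_if;
        auto simp: parity_sign_def split: if_splits; presburger)
qed

definition floor_kernel :: "cube \<Rightarrow> cube \<Rightarrow> int" where
  "floor_kernel e f =
    (case e of (a, b, z) \<Rightarrow> case f of (c, d, w) \<Rightarrow> if z = w then plane_kernel (c - a) (d - b) else 0)"

definition vdom_potential :: "cube \<Rightarrow> cube \<Rightarrow> int" where
  "vdom_potential v e = floor_kernel e v - floor_kernel e (cube_above v)"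

definition slab_effect :: "cube \<Rightarrow> cube \<Rightarrow> int" where
  "slab_effect q v = (\<Sum>e\<in>hslab q. vdom_potential v e)"

lemma floor_kernel_commute: "floor_kernel e f = floor_kernel f e"
  by (cases e; cases f) (simp add: floor_kernel_def plane_kernel_def)

lemma floor_kernel_cube_above: "floor_kernel (cube_above e) (cube_above f) = floor_kernel e f"
  by (cases e; cases f) (simp add: floor_kernel_def cube_above_def)

lemma sum_hslab_floor_kernel:
  "(\<Sum>e\<in>hslab (a, b, z). floor_kernel e (c, d, w)) = (if z = w then kernel_box (c - a) (d - b) else 0)"
  by (simp add: hslab_def floor_kernel_def kernel_box_def algebra_simps)

lemma slab_effect_eq:
  "slab_effect (a, b, z) (c, d, w) =
    (if even (a + b + c + d) then 0
     else if w = z then effect_profile (c - a) (d - b)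
     else if w + 1 = z then - effect_profile (c - a) (d - b) else 0)"
proof -
  have "slab_effect (a, b, z) (c, d, w) =
      (\<Sum>e\<in>hslab (a, b, z). floor_kernel e (c, d, w)) - (\<Sum>e\<in>hslab (a, b, z). floor_kernel e (c, d, w + 1))"
    by (simp add: slab_effect_def vdom_potential_def cube_above_def sum_subtractf)
  also have "\<dots> = (if z = w then kernel_box (c - a) (d - b) else 0)
      - (if z = w + 1 then kernel_box (c - a) (d - b) else 0)"
    by (simp only: sum_hslab_floor_kernel)
  finally show ?thesis by (auto simp: kernel_box_eq; presburger)
qed

lemma effect_eq_slab_effect:
  "even_cube q \<noteq> even_cube v \<Longrightarrow> effect (slab_ydom_corner q) (rot v) = slab_effect q v"
  by (cases q; cases v) (auto simp: even_cube_def slab_effect_eq effect_slab_ydom_corner_rot)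

lemma slab_effect_same_parity: "even_cube q = even_cube v \<Longrightarrow> slab_effect q v = 0"
  by (cases q; cases v) (auto simp: even_cube_def slab_effect_eq; presburger)

lemma Tw_kappa_parity_class:
  assumes "mixed_tiling t R"
  shows "Tw_kappa (parity_class \<beta> R) t =
    real_of_int (\<Sum>q\<in>{q. hslab q \<in> t \<and> even_cube q \<noteq> \<beta>}.
      \<Sum>v\<in>{v. zdom v \<in> t \<and> even_cube v = \<beta>}. slab_effect q v) / 4"
proof -
  let ?H = "{q. hslab q \<in> t \<and> even_cube q \<noteq> \<beta>}" and ?Z = "{v. zdom v \<in> t \<and> even_cube v = \<beta>}"
  have "inj_on slab_ydom_corner ?H"
    using inj_on_slab_ydom_corner_parity[of "\<not> \<beta>"] by (rule inj_on_subset) auto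
  moreover have "inj_on rot ?Z"
    using inj_on_rot_parity by (rule inj_on_subset) auto
  ultimately have "(\<Sum>p0\<in>slab_ydom_corner ` ?H. \<Sum>p1\<in>rot ` ?Z. effect p0 p1) =
      (\<Sum>q\<in>?H. \<Sum>v\<in>?Z. effect (slab_ydom_corner q) (rot v))"
    by (simp add: sum.reindex)
  also have "\<dots> = (\<Sum>q\<in>?H. \<Sum>v\<in>?Z. slab_effect q v)"
    by (intro sum.cong refl effect_eq_slab_effect) auto
  finally show ?thesis
    unfolding Tw_kappa_def twist_def ydom_corners_transform[OF assms] zdom_corners_transform[OF assms]
    by simp
qed

section \<open>Cancellation\<close>

lemma sum_cylinder_floor_kernel:
  assumes "finite D" and "0 \<le> w" and "w < int N"
  shows "(\<Sum>e\<in>cylinder D N. floor_kernel e (c, d, w)) = (\<Sum>p\<in>D. plane_kernel (c - fst p) (d - snd p))"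
proof -
  have "(\<Sum>e\<in>cylinder D N. floor_kernel e (c, d, w)) =
      (\<Sum>e\<in>{e \<in> cylinder D N. snd (snd e) = w}. floor_kernel e (c, d, w))"
    using finite_cylinder[OF assms(1)]
    by (intro sum.mono_neutral_right) (auto simp: floor_kernel_def split: prod.splits)
  also have "{e \<in> cylinder D N. snd (snd e) = w} = (\<lambda>p. (fst p, snd p, w)) ` D"
    using assms(2,3) by (force simp: cylinder_def image_iff)
  also have "(\<Sum>e\<in>(\<lambda>p. (fst p, snd p, w)) ` D. floor_kernel e (c, d, w)) =
      (\<Sum>p\<in>D. plane_kernel (c - fst p) (d - snd p))"
    by (subst sum.reindex) (auto simp: inj_on_def floor_kernel_def split: prod.splits)
  finally show ?thesis .
qed

lemma sum_cylinder_vdom_potential: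
  assumes "finite D" and "v \<in> cylinder D N" and "cube_above v \<in> cylinder D N"
  shows "(\<Sum>e\<in>cylinder D N. vdom_potential v e) = 0"
proof -
  obtain c d w where v: "v = (c, d, w)" by (cases v)
  with assms(2,3) have "0 \<le> w" "w + 1 < int N"
    by (auto simp: cube_above_def cylinder_def)
  then show ?thesis
    using sum_cylinder_floor_kernel[OF assms(1), of w N c d]
      sum_cylinder_floor_kernel[OF assms(1), of "w + 1" N c d]
    by (simp add: vdom_potential_def sum_subtractf v cube_above_def)
qed

lemma sum_vdom_potential_vdoms:
  "(\<Sum>v\<in>Z. \<Sum>u\<in>Z. vdom_potential v u + vdom_potential v (cube_above u)) = 0"
proof -
  have "(\<Sum>v\<in>Z. \<Sum>u\<in>Z. vdom_potential v u + vdom_potential v (cube_above u)) =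
      (\<Sum>v\<in>Z. \<Sum>u\<in>Z. floor_kernel (cube_above u) v) - (\<Sum>v\<in>Z. \<Sum>u\<in>Z. floor_kernel u (cube_above v))"
    by (simp add: vdom_potential_def floor_kernel_cube_above sum_subtractf)
  also have "(\<Sum>v\<in>Z. \<Sum>u\<in>Z. floor_kernel (cube_above u) v) = (\<Sum>u\<in>Z. \<Sum>v\<in>Z. floor_kernel v (cube_above u))"
    by (subst sum.swap) (simp add: floor_kernel_commute)
  finally show ?thesis by simp
qed

lemma sum_slab_effect_eq_zero:
  assumes "mixed_tiling t (cylinder D N)" and "finite D"
  shows "(\<Sum>q\<in>{q. hslab q \<in> t}. \<Sum>v\<in>{v. zdom v \<in> t}. slab_effect q v) = 0"
proof -
  let ?R = "cylinder D N" and ?H = "{q. hslab q \<in> t}" and ?Z = "{v. zdom v \<in> t}"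
  have "(\<Sum>q\<in>?H. \<Sum>v\<in>?Z. slab_effect q v) = (\<Sum>v\<in>?Z. \<Sum>q\<in>?H. \<Sum>e\<in>hslab q. vdom_potential v e)"
    unfolding slab_effect_def by (rule sum.swap)
  also have "\<dots> = (\<Sum>v\<in>?Z. (\<Sum>e\<in>?R. vdom_potential v e)
      - (\<Sum>u\<in>?Z. vdom_potential v u + vdom_potential v (cube_above u)))"
    by (simp add: sum_mixed_tiling[OF assms(1) finite_cylinder[OF assms(2)]])
  also have "\<dots> = - (\<Sum>v\<in>?Z. \<Sum>u\<in>?Z. vdom_potential v u + vdom_potential v (cube_above u))"
  proof -
    have "v \<in> ?R" "cube_above v \<in> ?R" if "v \<in> ?Z" for v
      using tile_subset[OF assms(1) that[simplified]] by (auto simp: zdom_eq)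
    then show ?thesis
      by (simp add: sum_cylinder_vdom_potential[OF assms(2)] sum_negf)
  qed
  also have "\<dots> = 0"
    by (simp add: sum_vdom_potential_vdoms)
  finally show ?thesis .
qed

theorem lemma4p1:
  fixes D :: "(int \<times> int) set" and N :: nat and t :: "cube set set"
  assumes "planar_domain D"
    and "mixed_tiling t (cylinder D N)"
  shows "Tw_kappa (kappa_even (cylinder D N)) t = - Tw_kappa (kappa_odd (cylinder D N)) t"
proof -
  let ?R = "cylinder D N"
  have "finite D" using assms(1) by (simp add: planar_domain_def)
  then have "finite {q. hslab q \<in> t}" "finite {v. zdom v \<in> t}"
    using tile_corners_subset[OF assms(2)] finite_cylinder by (auto intro: finite_subset)
  have "Tw_kappa (kappa_even ?R) t + Tw_kappa (kappa_odd ?R) t = (\<Sum>\<beta>\<in>UNIV. Tw_kappa (parity_class \<beta> ?R) t)"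
    by (simp add: kappa_even_eq_parity_class kappa_odd_eq_parity_class UNIV_bool)
  also have "\<dots> = real_of_int (\<Sum>\<beta>\<in>UNIV. \<Sum>q\<in>{q. hslab q \<in> t \<and> even_cube q \<noteq> \<beta>}.
      \<Sum>v\<in>{v. zdom v \<in> t \<and> even_cube v = \<beta>}. slab_effect q v) / 4"
    by (simp add: Tw_kappa_parity_class[OF assms(2)] UNIV_bool add_divide_distrib)
  also have "\<dots> = real_of_int (\<Sum>q\<in>{q. hslab q \<in> t}. \<Sum>v\<in>{v. zdom v \<in> t}. slab_effect q v) / 4"
    using sum_sum_cross_classes[OF \<open>finite {q. hslab q \<in> t}\<close> \<open>finite {v. zdom v \<in> t}\<close>
        slab_effect_same_parity]
    by simp
  also have "\<dots> = 0"
    by (simp add: sum_slab_effect_eq_zero[OF assms(2) \<open>finite D\<close>])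
  finally show ?thesis by simp
qed

end
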